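(* Let $G$ be a complete multipartite digraph with the parity property, and let $A,B$ be two distinct maximal antichains of $G$. Then there exist subsets $R_{AB}\subseteq A$ and $S_{AB}\subseteq B$ such that for all $x\in A$ and $y\in B$: $x\to y$ if and only if ($x\in R_{AB}\iff y\in S_{AB}$).
   Context: A digraph is a set with an irreflexive binary relation $\to$ such that $x\to y$ and $y\to x$ never both hold; write $x\perp y$ if neither $x\to y$ nor $y\to x$ (with $x\perp x$). A digraph is complete multipartite if $\perp$ is an equivalence relation; its maximal antichains are the $\perp$-classes, and any two points in different classes are joined by an edge in exactly one direction. The digraph has the parity property if for every two distinct maximal antichains $A,B$, every distinct $a,a'\in A$ and every distinct $b,b'\in B$, the number of edges pointing from a vertex of $\{a,a'\}$ to a vertex of $\{b,b'\}$ is even. *)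

theory Defs
  imports Main
begin

definition digraph :: "'a set \<Rightarrow> ('a \<Rightarrow> 'a \<Rightarrow> bool) \<Rightarrow> bool" where
  "digraph V E \<longleftrightarrow> (\<forall>x y. E x y \<longrightarrow> x \<in> V \<and> y \<in> V) \<and>
     (\<forall>x\<in>V. \<not> E x x) \<and> (\<forall>x\<in>V. \<forall>y\<in>V. \<not> (E x y \<and> E y x))"

definition perp :: "('a \<Rightarrow> 'a \<Rightarrow> bool) \<Rightarrow> 'a \<Rightarrow> 'a \<Rightarrow> bool" where
  "perp E x y \<longleftrightarrow> \<not> E x y \<and> \<not> E y x"

definition antichain :: "'a set \<Rightarrow> ('a \<Rightarrow> 'a \<Rightarrow> bool) \<Rightarrow> 'a set \<Rightarrow> bool" where
  "antichain V E A \<longleftrightarrow> A \<subseteq> V \<and> (\<forall>x\<in>A. \<forall>y\<in>A. perp E x y)"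

definition maximal_antichain :: "'a set \<Rightarrow> ('a \<Rightarrow> 'a \<Rightarrow> bool) \<Rightarrow> 'a set \<Rightarrow> bool" where
  "maximal_antichain V E A \<longleftrightarrow> antichain V E A \<and>
     (\<forall>B. antichain V E B \<and> A \<subseteq> B \<longrightarrow> B = A)"

definition complete_multipartite :: "'a set \<Rightarrow> ('a \<Rightarrow> 'a \<Rightarrow> bool) \<Rightarrow> bool" where
  "complete_multipartite V E \<longleftrightarrow> digraph V E \<and>
     equiv V {(x, y). x \<in> V \<and> y \<in> V \<and> perp E x y}"

definition parity_property :: "'a set \<Rightarrow> ('a \<Rightarrow> 'a \<Rightarrow> bool) \<Rightarrow> bool" where
  "parity_property V E \<longleftrightarrow>
     (\<forall>A B a a' b b'. maximal_antichain V E A \<and> maximal_antichain V E B \<and> A \<noteq> B \<and>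
        a \<in> A \<and> a' \<in> A \<and> a \<noteq> a' \<and> b \<in> B \<and> b' \<in> B \<and> b \<noteq> b' \<longrightarrow>
        even (card {(x, y). x \<in> {a, a'} \<and> y \<in> {b, b'} \<and> E x y}))"

end

theory Submission
  imports Defs
begin

text \<open>Fix \<open>a\<^sub>0 \<in> A\<close> and \<open>b\<^sub>0 \<in> B\<close>. The parity property on the rectangle
  \<open>{a\<^sub>0, x} \<times> {b\<^sub>0, y}\<close> says that \<open>x \<rightarrow> y\<close> is the exclusive-or of
  \<open>x \<rightarrow> b\<^sub>0\<close>, \<open>a\<^sub>0 \<rightarrow> y\<close> and \<open>a\<^sub>0 \<rightarrow> b\<^sub>0\<close>. Hence the edge relation between \<open>A\<close>
  and \<open>B\<close> is an exclusive-or of a condition on \<open>x\<close> and a condition on \<open>y\<close>,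
  which is exactly the claimed form with \<open>R = {x. x \<rightarrow> b\<^sub>0 \<longleftrightarrow> a\<^sub>0 \<rightarrow> b\<^sub>0}\<close> and
  \<open>S = {y. a\<^sub>0 \<rightarrow> y}\<close>.\<close>

lemma even_card_rectangle_edges_iff:
  assumes "a \<noteq> a'" "b \<noteq> b'"
  shows "even (card {(x, y). x \<in> {a, a'} \<and> y \<in> {b, b'} \<and> E x y})
         \<longleftrightarrow> ((E a b \<longleftrightarrow> E a b') \<longleftrightarrow> (E a' b \<longleftrightarrow> E a' b'))"
proof -
  have edges: "{(x, y). x \<in> {a, a'} \<and> y \<in> {b, b'} \<and> E x y} =
     (if E a b then {(a, b)} else {}) \<union> (if E a b' then {(a, b')} else {}) \<union>
     (if E a' b then {(a', b)} else {}) \<union> (if E a' b' then {(a', b')} else {})"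
    by auto
  show ?thesis
    unfolding edges using assms by (cases "E a b"; cases "E a b'"; cases "E a' b"; cases "E a' b'") auto
qed

lemma parity_property_rectangles:
  assumes "parity_property V E"
    and "maximal_antichain V E A" "maximal_antichain V E B" "A \<noteq> B"
    and "x \<in> A" "x' \<in> A" "y \<in> B" "y' \<in> B"
  shows "(E x y \<longleftrightarrow> E x y') \<longleftrightarrow> (E x' y \<longleftrightarrow> E x' y')"
proof (cases "x = x' \<or> y = y'")
  case True
  then show ?thesis by auto
next
  case False
  with assms have "even (card {(u, v). u \<in> {x, x'} \<and> v \<in> {y, y'} \<and> E u v})"
    unfolding parity_property_def by blast
  with False show ?thesis
    using even_card_rectangle_edges_iff[of x x' y y' E] by blast
qed

lemma relation_eq_xor_of_cut:
  assumes rect: "\<And>x x' y y'. x \<in> A \<Longrightarrow> x' \<in> A \<Longrightarrow> y \<in> B \<Longrightarrow> y' \<in> B \<Longrightarrow>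
                   (P x y \<longleftrightarrow> P x y') \<longleftrightarrow> (P x' y \<longleftrightarrow> P x' y')"
  shows "\<exists>R S. R \<subseteq> A \<and> S \<subseteq> B \<and> (\<forall>x\<in>A. \<forall>y\<in>B. P x y \<longleftrightarrow> (x \<in> R \<longleftrightarrow> y \<in> S))"
proof (cases "A = {} \<or> B = {}")
  case True
  then show ?thesis by blast
next
  case False
  then obtain a\<^sub>0 b\<^sub>0 where "a\<^sub>0 \<in> A" "b\<^sub>0 \<in> B" by blast
  let ?R = "{x \<in> A. P x b\<^sub>0 \<longleftrightarrow> P a\<^sub>0 b\<^sub>0}" and ?S = "{y \<in> B. P a\<^sub>0 y}"
  have "P x y \<longleftrightarrow> (x \<in> ?R \<longleftrightarrow> y \<in> ?S)" if "x \<in> A" "y \<in> B" for x y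
    using rect[OF \<open>x \<in> A\<close> \<open>a\<^sub>0 \<in> A\<close> \<open>y \<in> B\<close> \<open>b\<^sub>0 \<in> B\<close>] that by auto
  then show ?thesis
    by (intro exI[of _ ?R] exI[of _ ?S]) auto
qed

theorem lemma4p1:
  fixes V :: "'a set" and E :: "'a \<Rightarrow> 'a \<Rightarrow> bool" and A B :: "'a set"
  assumes "complete_multipartite V E"
    and "parity_property V E"
    and "maximal_antichain V E A" and "maximal_antichain V E B" and "A \<noteq> B"
  shows "\<exists>R S. R \<subseteq> A \<and> S \<subseteq> B \<and>
           (\<forall>x\<in>A. \<forall>y\<in>B. E x y \<longleftrightarrow> (x \<in> R \<longleftrightarrow> y \<in> S))"
  using parity_property_rectangles[OF assms(2-5)] by (rule relation_eq_xor_of_cut)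

end
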